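(* Let $\mathcal E^{(-1)}=0$ and, for $q\in\mathbb Z_+$, $\mathcal E^{(q)}=\{X\in\mathfrak D_V\mid [D_\mu,X]\in\mathcal E^{(q-1)},\ \mu=1,\dots,m\}$. Then for every $q\in\mathbb Z_+$, $$\mathcal E^{(q)}=\bigoplus_{k\in\mathsf I,\ |k|\le q}\mathcal E^k,\qquad \mathcal E^k=\Big\{\sum_{\alpha,i}(\varepsilon^k_\phi)^\alpha_i\,\partial_{u^\alpha_i}\ \Big|\ \phi\in\mathcal A^{\mathsf A}\Big\};$$ that is, a vertical differentiation $X=\sum\zeta^\alpha_i\partial_{u^\alpha_i}$ lies in $\mathcal E^{(q)}$ if and only if $\zeta=\sum_{|k|\le q}\varepsilon^k_{\phi_k}$ for some $\phi_k\in\mathcal A^{\mathsf A}$, and these $\phi_k$ are unique.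
   Context: $\mathbb F\in\{\mathbb R,\mathbb C\}$, $m\in\mathbb N$, $\mathsf A$ a finite index set, $\mathsf I=\mathbb Z_+^m$, $|k|=k^1+\dots+k^m$, $k\le i$ componentwise, $\binom{i}{k}=\prod_\mu\binom{i^\mu}{k^\mu}$, $(\mu)$ the multi-index with $1$ in position $\mu$. Variables $x^\mu$ on $\mathbb R^m$ and $u^\alpha_i$ ($\alpha\in\mathsf A$, $i\in\mathsf I$); $\mathcal A$ is the algebra of smooth $\mathbb F$-valued functions each depending on finitely many of these variables. $D_\mu=\partial_{x^\mu}+\sum_{\alpha,i}u^\alpha_{i+(\mu)}\partial_{u^\alpha_i}$, $D_j=D_1^{j^1}\cdots D_m^{j^m}$. $\mathfrak D_V$ is the space of vertical differentiations $X=\sum_{\alpha,i}\zeta^\alpha_i\partial_{u^\alpha_i}$ with arbitrary coefficients $\zeta^\alpha_i\in\mathcal A$ (each acts on $f\in\mathcal A$ as a finite sum); one has $[D_\mu,X]=\sum(D_\mu\zeta^\alpha_i-\zeta^\alpha_{i+(\mu)})\partial_{u^\alpha_i}$. For $k\in\mathsf I$, $\phi=(\phi^\alpha)\in\mathcal A^{\mathsf A}$: $(\varepsilon^k_\phi)^\alpha_i=\binom{i}{k}D_{i-k}\phi^\alpha$ if $k\le i$ and $0$ otherwise. *)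

theory Defs
  imports "HOL-Analysis.Analysis"
begin

(* Coordinates of the jet space: x^mu (mu < m) and u^alpha_i (alpha in 'a, i a multi-index).
   Multi-indices are functions nat => nat vanishing outside {..<m}; position mu = 0..m-1. *)
datatype 'a jvar = Xv nat | Uv 'a "nat \<Rightarrow> nat"

definition multi_idx :: "nat \<Rightarrow> (nat \<Rightarrow> nat) set" where
  "multi_idx m = {i. \<forall>\<mu>. m \<le> \<mu> \<longrightarrow> i \<mu> = 0}"

definition valid_var :: "nat \<Rightarrow> 'a jvar \<Rightarrow> bool" where
  "valid_var m v = (case v of Xv \<mu> \<Rightarrow> \<mu> < m | Uv \<alpha> i \<Rightarrow> i \<in> multi_idx m)"

definition mabs :: "nat \<Rightarrow> (nat \<Rightarrow> nat) \<Rightarrow> nat" where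
  "mabs m k = (\<Sum>\<mu><m. k \<mu>)"

definition mle :: "nat \<Rightarrow> (nat \<Rightarrow> nat) \<Rightarrow> (nat \<Rightarrow> nat) \<Rightarrow> bool" where
  "mle m k i = (\<forall>\<mu><m. k \<mu> \<le> i \<mu>)"

definition mchoose :: "nat \<Rightarrow> (nat \<Rightarrow> nat) \<Rightarrow> (nat \<Rightarrow> nat) \<Rightarrow> nat" where
  "mchoose m i k = (\<Prod>\<mu><m. i \<mu> choose k \<mu>)"

definition msub :: "(nat \<Rightarrow> nat) \<Rightarrow> (nat \<Rightarrow> nat) \<Rightarrow> (nat \<Rightarrow> nat)" where
  "msub i k = (\<lambda>\<mu>. i \<mu> - k \<mu>)"

definition incr :: "(nat \<Rightarrow> nat) \<Rightarrow> nat \<Rightarrow> (nat \<Rightarrow> nat)" where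
  "incr i \<mu> = i(\<mu> := Suc (i \<mu>))"

type_synonym ('a, 'f) fn = "('a jvar \<Rightarrow> real) \<Rightarrow> 'f"

definition pder :: "'a jvar \<Rightarrow> ('a, 'f::real_normed_vector) fn \<Rightarrow> ('a, 'f) fn" where
  "pder v f = (\<lambda>p. vector_derivative (\<lambda>t. f (p(v := t))) (at (p v)))"

fun pd_iter :: "'a jvar list \<Rightarrow> ('a, 'f::real_normed_vector) fn \<Rightarrow> ('a, 'f) fn" where
  "pd_iter [] f = f"
| "pd_iter (v # vs) f = pder v (pd_iter vs f)"

definition smooth_fn :: "('a, 'f::real_normed_vector) fn \<Rightarrow> bool" where
  "smooth_fn f \<longleftrightarrow>
     (\<forall>vs. continuous_on UNIV (pd_iter vs f) \<and>
          (\<forall>v p. (\<lambda>t. pd_iter vs f (p(v := t))) differentiable (at (p v))))"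

definition depends_only :: "'a jvar set \<Rightarrow> ('a, 'f) fn \<Rightarrow> bool" where
  "depends_only S f \<longleftrightarrow> (\<forall>p q. (\<forall>v\<in>S. p v = q v) \<longrightarrow> f p = f q)"

definition Aalg :: "nat \<Rightarrow> ('a, 'f::real_normed_vector) fn set" where
  "Aalg m = {f. smooth_fn f \<and> (\<exists>S. finite S \<and> (\<forall>v\<in>S. valid_var m v) \<and> depends_only S f)}"

(* total derivative D_mu (the sum is finite for f in \<A>) *)
definition Dtot :: "nat \<Rightarrow> nat \<Rightarrow> ('a, 'f::real_normed_field) fn \<Rightarrow> ('a, 'f) fn" where
  "Dtot m \<mu> f = (\<lambda>p. pder (Xv \<mu>) f p +
      (\<Sum>(\<alpha>, i) \<in> {(\<alpha>, i). i \<in> multi_idx m \<and> pder (Uv \<alpha> i) f \<noteq> (\<lambda>_. 0)}.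
          of_real (p (Uv \<alpha> (incr i \<mu>))) * pder (Uv \<alpha> i) f p))"

definition Dmulti :: "nat \<Rightarrow> (nat \<Rightarrow> nat) \<Rightarrow> ('a, 'f::real_normed_field) fn \<Rightarrow> ('a, 'f) fn" where
  "Dmulti m j = foldr (\<lambda>\<mu> g. (Dtot m \<mu> ^^ j \<mu>) \<circ> g) [0..<m] id"

(* vertical differentiations, represented by their coefficient families zeta^alpha_i *)
type_synonym ('a, 'f) vfield = "'a \<Rightarrow> (nat \<Rightarrow> nat) \<Rightarrow> ('a, 'f) fn"

definition VD :: "nat \<Rightarrow> ('a, 'f::real_normed_vector) vfield set" where
  "VD m = {\<zeta>. \<forall>\<alpha> i. (i \<in> multi_idx m \<longrightarrow> \<zeta> \<alpha> i \<in> Aalg m) \<and>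
                      (i \<notin> multi_idx m \<longrightarrow> \<zeta> \<alpha> i = (\<lambda>_. 0))}"

(* coefficients of [D_mu, X] *)
definition bracket :: "nat \<Rightarrow> nat \<Rightarrow> ('a, 'f::real_normed_field) vfield \<Rightarrow> ('a, 'f) vfield" where
  "bracket m \<mu> \<zeta> = (\<lambda>\<alpha> i. if i \<in> multi_idx m
       then (\<lambda>p. Dtot m \<mu> (\<zeta> \<alpha> i) p - \<zeta> \<alpha> (incr i \<mu>) p) else (\<lambda>_. 0))"

(* Epre m 0 = E^(-1) = 0,  Epre m (Suc q) = E^(q) *)
fun Epre :: "nat \<Rightarrow> nat \<Rightarrow> ('a, 'f::real_normed_field) vfield set" where
  "Epre m 0 = {\<lambda>\<alpha> i p. 0}"
| "Epre m (Suc q) = {\<zeta> \<in> VD m. \<forall>\<mu><m. bracket m \<mu> \<zeta> \<in> Epre m q}"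

definition Ecal :: "nat \<Rightarrow> nat \<Rightarrow> ('a, 'f::real_normed_field) vfield set" where
  "Ecal m q = Epre m (Suc q)"

definition eps :: "nat \<Rightarrow> (nat \<Rightarrow> nat) \<Rightarrow> ('a \<Rightarrow> ('a, 'f::real_normed_field) fn) \<Rightarrow> ('a, 'f) vfield" where
  "eps m k \<phi> = (\<lambda>\<alpha> i. if i \<in> multi_idx m \<and> mle m k i
      then (\<lambda>p. of_nat (mchoose m i k) * Dmulti m (msub i k) (\<phi> \<alpha>) p) else (\<lambda>_. 0))"

definition Kset :: "nat \<Rightarrow> nat \<Rightarrow> (nat \<Rightarrow> nat) set" where
  "Kset m q = {k \<in> multi_idx m. mabs m k \<le> q}"

definition eps_sum :: "nat \<Rightarrow> nat \<Rightarrow> ((nat \<Rightarrow> nat) \<Rightarrow> 'a \<Rightarrow> ('a, 'f::real_normed_field) fn) \<Rightarrow> ('a, 'f) vfield" where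
  "eps_sum m q \<Phi> = (\<lambda>\<alpha> i p. \<Sum>k\<in>Kset m q. eps m k (\<Phi> k) \<alpha> i p)"

end

theory Submission
  imports Defs
begin

text \<open>By the Pascal rule for binomial coefficients and the commutativity of total derivatives (which
  rests on Schwarz's theorem), \<open>[D\<^sub>\<mu>, \<epsilon>\<^sup>k\<^sub>\<phi>] = -\<epsilon>\<^sup>k\<^sup>-\<^sup>(\<^sup>\<mu>\<^sup>)\<^sub>\<phi>\<close>, or \<open>0\<close> if \<open>k\<^sup>\<mu> = 0\<close>; hence
  \<open>\<epsilon>\<^sup>k\<^sub>\<phi> \<in> \<E>\<^sup>(\<^sup>|\<^sup>k\<^sup>|\<^sup>)\<close>. The coefficient of \<open>\<partial>\<^sub>u\<^sub>\<alpha>\<^sub>i\<close> in \<open>\<Sum>\<^sub>k \<epsilon>\<^sup>k\<^sub>\<phi>\<^sub>k\<close> is \<open>\<phi>\<^sub>i\<close> plus terms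
  involving only \<open>\<phi>\<^sub>k\<close> with \<open>k < i\<close>, so the \<open>\<phi>\<^sub>k\<close> are unique, and for \<open>X \<in> \<E>\<^sup>(\<^sup>q\<^sup>)\<close> they can be
  chosen to match the coefficients of \<open>X\<close> of order \<open>\<le> q\<close>. The difference then lies in \<open>\<E>\<^sup>(\<^sup>q\<^sup>)\<close>
  and has no coefficients of order \<open>\<le> q\<close>; by induction on \<open>q\<close> all its brackets vanish, so its
  coefficients satisfy \<open>\<zeta>\<^sub>i\<^sub>+\<^sub>(\<^sub>\<mu>\<^sub>) = D\<^sub>\<mu> \<zeta>\<^sub>i\<close> with \<open>\<zeta>\<^sub>0 = 0\<close>, and it is zero.\<close>

section \<open>Smooth functions of the jet variables\<close>

definition partially_differentiable :: "('a, 'f::real_normed_vector) fn \<Rightarrow> bool" where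
  "partially_differentiable h \<longleftrightarrow> (\<forall>v p. (\<lambda>t. h (p(v:=t))) differentiable (at (p v)))"

definition smooth_upto :: "nat \<Rightarrow> ('a, 'f::real_normed_vector) fn \<Rightarrow> bool" where
  "smooth_upto n h \<longleftrightarrow> (\<forall>vs. length vs \<le> n \<longrightarrow>
     continuous_on UNIV (pd_iter vs h) \<and> partially_differentiable (pd_iter vs h))"

lemma smooth_fn_iff_smooth_upto: "smooth_fn h \<longleftrightarrow> (\<forall>n. smooth_upto n h)"
  unfolding smooth_fn_def smooth_upto_def partially_differentiable_def by blast

lemma smooth_fn_continuous: "smooth_fn h \<Longrightarrow> continuous_on UNIV h"
  unfolding smooth_fn_def by (drule spec[of _ "[]"]) simp

lemma smooth_fn_partially_differentiable: "smooth_fn h \<Longrightarrow> partially_differentiable h"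
  unfolding smooth_fn_def partially_differentiable_def by (drule spec[of _ "[]"]) simp

lemma partially_differentiable_has_vector_derivative:
  assumes "partially_differentiable h"
  shows "((\<lambda>t. h (p(v:=t))) has_vector_derivative pder v h (p(v:=t0))) (at t0)"
proof -
  have "(\<lambda>t. h ((p(v:=t0))(v:=t))) differentiable (at ((p(v:=t0)) v))"
    using assms unfolding partially_differentiable_def by blast
  thus ?thesis unfolding pder_def by (simp add: vector_derivative_works)
qed

lemma pd_iter_append: "pd_iter (vs @ [v]) h = pd_iter vs (pder v h)"
  by (induction vs) auto

lemma smooth_fn_pder: "smooth_fn h \<Longrightarrow> smooth_fn (pder v h)"
  unfolding smooth_fn_def pd_iter_append[symmetric] by blast

lemma smooth_fnI_pder:
  assumes "continuous_on UNIV h" "partially_differentiable h" "\<And>v. smooth_fn (pder v h)"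
  shows "smooth_fn h"
  unfolding smooth_fn_def
proof (intro allI)
  fix vs :: "'a jvar list"
  show "continuous_on UNIV (pd_iter vs h) \<and>
         (\<forall>v p. (\<lambda>t. pd_iter vs h (p(v := t))) differentiable at (p v))"
  proof (cases vs rule: rev_exhaust)
    case Nil thus ?thesis using assms(1,2) by (simp add: partially_differentiable_def)
  next
    case (snoc ws w)
    thus ?thesis using assms(3)[of w] unfolding smooth_fn_def by (simp add: pd_iter_append)
  qed
qed

lemma pder_add:
  "partially_differentiable f \<Longrightarrow> partially_differentiable g \<Longrightarrow>
   pder v (\<lambda>p. f p + g p) = (\<lambda>p. pder v f p + pder v g p)"
  unfolding pder_def partially_differentiable_def by (intro ext vector_derivative_add_at) auto

lemma pder_diff:
  "partially_differentiable f \<Longrightarrow> partially_differentiable g \<Longrightarrow>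
   pder v (\<lambda>p. f p - g p) = (\<lambda>p. pder v f p - pder v g p)"
  unfolding pder_def partially_differentiable_def by (intro ext vector_derivative_diff_at) auto

lemma pder_mult:
  "partially_differentiable f \<Longrightarrow> partially_differentiable g \<Longrightarrow>
   pder v (\<lambda>p. f p * g p) = (\<lambda>p. f p * pder v g p + pder v f p * (g p :: 'f::real_normed_field))"
  unfolding pder_def partially_differentiable_def by (intro ext) (simp add: vector_derivative_mult_at)

lemma pder_const: "pder v (\<lambda>p. c) = (\<lambda>p. 0)"
  unfolding pder_def by simp

lemma pder_cmult:
  assumes "smooth_fn f"
  shows "pder v (\<lambda>p. c * f p) = (\<lambda>p. c * pder v f p :: 'f::real_normed_field)"
proof -
  have "partially_differentiable (\<lambda>p. c)" unfolding partially_differentiable_def by simp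
  thus ?thesis
    using pder_mult[of "\<lambda>p. c" f v] assms by (simp add: pder_const smooth_fn_partially_differentiable)
qed

lemma pder_coord:
  "pder v (\<lambda>p. of_real (p w) :: 'f::real_normed_field) = (\<lambda>p. if v = w then 1 else 0)"
proof (intro ext)
  fix p :: "'a jvar \<Rightarrow> real"
  have "((\<lambda>t. of_real t :: 'f) has_vector_derivative of_real 1) (at (p v))"
    by (rule has_vector_derivative_of_real) (rule DERIV_ident)
  thus "pder v (\<lambda>p. of_real (p w) :: 'f) p = (if v = w then 1 else 0)"
    unfolding pder_def by (simp add: vector_derivative_at)
qed

lemma partially_differentiable_add:
  "partially_differentiable f \<Longrightarrow> partially_differentiable g \<Longrightarrow>
   partially_differentiable (\<lambda>p. f p + g p)"
  unfolding partially_differentiable_def by (auto intro: differentiable_add)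

lemma partially_differentiable_mult:
  "partially_differentiable f \<Longrightarrow> partially_differentiable g \<Longrightarrow>
   partially_differentiable (\<lambda>p. f p * (g p :: 'f::real_normed_field))"
  unfolding partially_differentiable_def by (auto intro: differentiable_mult)

lemma pd_iter_add:
  assumes "smooth_upto n a" "smooth_upto n b" "length vs \<le> Suc n"
  shows "pd_iter vs (\<lambda>p. a p + b p) = (\<lambda>p. pd_iter vs a p + pd_iter vs b p)"
  using assms(3)
proof (induction vs)
  case (Cons v vs)
  hence "length vs \<le> n" by simp
  thus ?case using Cons assms(1,2) unfolding smooth_upto_def by (simp add: pder_add)
qed simp

lemma smooth_upto_add: "smooth_upto n a \<Longrightarrow> smooth_upto n b \<Longrightarrow> smooth_upto n (\<lambda>p. a p + b p)"
  unfolding smooth_upto_def[of n "\<lambda>p. a p + b p"]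
proof (intro allI impI)
  fix vs :: "'a jvar list" assume a: "smooth_upto n a" "smooth_upto n b" and l: "length vs \<le> n"
  hence e: "pd_iter vs (\<lambda>p. a p + b p) = (\<lambda>p. pd_iter vs a p + pd_iter vs b p)"
    by (intro pd_iter_add) auto
  show "continuous_on UNIV (pd_iter vs (\<lambda>p. a p + b p)) \<and>
        partially_differentiable (pd_iter vs (\<lambda>p. a p + b p))"
    unfolding e using a l unfolding smooth_upto_def
    by (auto intro: continuous_on_add partially_differentiable_add)
qed

lemma smooth_fn_add: "smooth_fn a \<Longrightarrow> smooth_fn b \<Longrightarrow> smooth_fn (\<lambda>p. a p + b p)"
  by (simp add: smooth_fn_iff_smooth_upto smooth_upto_add)

text \<open>By the Leibniz rule, derivatives of order \<open>n + 1\<close> of a product are derivatives of order \<open>n\<close>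
  of products of smooth functions; hence the induction on \<open>n\<close> for all pairs of factors.\<close>

lemma smooth_upto_mult:
  "smooth_fn f \<Longrightarrow> smooth_fn g \<Longrightarrow> smooth_upto n (\<lambda>p. f p * (g p :: 'f::real_normed_field))"
proof (induction n arbitrary: f g)
  case 0
  thus ?case unfolding smooth_upto_def
    by (auto intro: continuous_on_mult smooth_fn_continuous partially_differentiable_mult
        smooth_fn_partially_differentiable)
next
  case (Suc n)
  show ?case unfolding smooth_upto_def
  proof (intro allI impI)
    fix vs :: "'a jvar list" assume l: "length vs \<le> Suc n"
    show "continuous_on UNIV (pd_iter vs (\<lambda>p. f p * g p)) \<and>
          partially_differentiable (pd_iter vs (\<lambda>p. f p * g p))"
    proof (cases vs rule: rev_exhaust)
      case Nil
      with Suc.IH[OF Suc.prems] show ?thesis unfolding smooth_upto_def by (metis le0 list.size(3))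
    next
      case (snoc ws w)
      have e: "pd_iter vs (\<lambda>p. f p * g p) = pd_iter ws (\<lambda>p. f p * pder w g p + pder w f p * g p)"
        using snoc Suc.prems
        by (simp add: pd_iter_append pder_mult smooth_fn_partially_differentiable)
      have "smooth_upto n (\<lambda>p. f p * pder w g p + pder w f p * g p)"
        using Suc by (intro smooth_upto_add Suc.IH smooth_fn_pder)
      thus ?thesis unfolding e using l snoc smooth_upto_def by auto
    qed
  qed
qed

lemma smooth_fn_mult: "smooth_fn f \<Longrightarrow> smooth_fn g \<Longrightarrow> smooth_fn (\<lambda>p. f p * (g p :: 'f::real_normed_field))"
  by (simp add: smooth_fn_iff_smooth_upto smooth_upto_mult)

lemma smooth_fn_const: "smooth_fn (\<lambda>p. c)"
proof -
  have "pd_iter vs (\<lambda>p. c) = (if vs = [] then (\<lambda>p. c) else (\<lambda>p. 0))" for vs :: "'a jvar list"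
    by (induction vs) (auto simp: pder_const)
  thus ?thesis unfolding smooth_fn_def by simp
qed

lemma smooth_fn_diff: "smooth_fn a \<Longrightarrow> smooth_fn b \<Longrightarrow> smooth_fn (\<lambda>p. a p - (b p :: 'f::real_normed_field))"
  using smooth_fn_add[OF _ smooth_fn_mult[OF smooth_fn_const[of "-1"]], of a b] by simp

lemma smooth_fn_coord: "smooth_fn (\<lambda>p. of_real (p w) :: 'f::real_normed_field)"
proof (rule smooth_fnI_pder)
  show "continuous_on UNIV (\<lambda>p. of_real (p w) :: 'f)"
    by (intro continuous_on_of_real continuous_on_product_coordinates)
  have "((\<lambda>t. of_real t :: 'f) has_vector_derivative of_real 1) (at t)" for t
    by (rule has_vector_derivative_of_real) (rule DERIV_ident)
  hence "(\<lambda>t. of_real ((p(v := t)) w) :: 'f) differentiable (at t0)" for p v t0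
    by (cases "v = w") (auto intro: differentiableI_vector)
  thus "partially_differentiable (\<lambda>p. of_real (p w) :: 'f)"
    unfolding partially_differentiable_def by blast
  show "smooth_fn (pder v (\<lambda>p. of_real (p w) :: 'f))" for v
    unfolding pder_coord by (rule smooth_fn_const)
qed

lemma smooth_fn_sum:
  "finite A \<Longrightarrow> (\<And>x. x \<in> A \<Longrightarrow> smooth_fn (F x)) \<Longrightarrow> smooth_fn (\<lambda>p. \<Sum>x\<in>A. F x p)"
  by (induction A rule: finite_induct) (simp_all add: smooth_fn_const smooth_fn_add)

lemma pder_sum:
  "finite A \<Longrightarrow> (\<And>x. x \<in> A \<Longrightarrow> smooth_fn (F x)) \<Longrightarrow>
   pder v (\<lambda>p. \<Sum>x\<in>A. F x p) = (\<lambda>p. \<Sum>x\<in>A. pder v (F x) p)"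
proof (induction A rule: finite_induct)
  case (insert x A)
  thus ?case
    by (simp add: pder_add smooth_fn_partially_differentiable smooth_fn_sum)
qed (simp add: pder_const)

section \<open>Symmetry of mixed partial derivatives\<close>

lemma norm_increment_le:
  fixes f :: "real \<Rightarrow> 'f::real_normed_vector"
  assumes ab: "a \<le> b"
    and d: "\<And>x. x \<in> {a..b} \<Longrightarrow> (f has_vector_derivative f' x) (at x)"
    and bd: "\<And>x. x \<in> {a..b} \<Longrightarrow> norm (f' x - c) \<le> B"
  shows "norm (f b - f a - (b - a) *\<^sub>R c) \<le> (b - a) * B"
proof (cases "a = b")
  case False
  hence ab': "a < b" using ab by simp
  define g where "g x = f x - x *\<^sub>R c" for x
  have dg: "(g has_vector_derivative (f' x - c)) (at x)" if "x \<in> {a..b}" for x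
    unfolding g_def using d[OF that] by (intro derivative_eq_intros) auto
  have "continuous_on {a..b} g"
    using dg has_vector_derivative_continuous by (blast intro: continuous_at_imp_continuous_on)
  moreover have "continuous_on {a..b} (\<lambda>x. x * B)" by (intro continuous_intros)
  ultimately have "norm (g b - g a) \<le> b * B - a * B"
    using ab' dg bd
    by (intro differentiable_bound_general[of a b g "\<lambda>x. x * B" "\<lambda>x. f' x - c" "\<lambda>_. B"])
       (auto intro!: derivative_eq_intros simp: has_real_derivative_iff_has_vector_derivative[symmetric])
  moreover have "g b - g a = f b - f a - (b - a) *\<^sub>R c" unfolding g_def by (simp add: algebra_simps)
  ultimately show ?thesis by (simp add: algebra_simps)
qed simp

text \<open>Schwarz's theorem: the second difference \<open>G(a+h,b+h) - G(a+h,b) - G(a,b+h) + G(a,b)\<close> is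
  \<open>h\<^sup>2 G\<^sub>1\<^sub>2(a,b) + o(h\<^sup>2)\<close> and \<open>h\<^sup>2 G\<^sub>2\<^sub>1(a,b) + o(h\<^sup>2)\<close> by the mean value theorem applied in either order.\<close>

lemma mixed_partials_eq:
  fixes G :: "real \<Rightarrow> real \<Rightarrow> 'f::real_normed_vector"
  assumes G1: "\<And>s t. ((\<lambda>s. G s t) has_vector_derivative G1 s t) (at s)"
  and G2: "\<And>s t. ((\<lambda>t. G s t) has_vector_derivative G2 s t) (at t)"
  and G12: "\<And>s t. ((\<lambda>t. G1 s t) has_vector_derivative G12 s t) (at t)"
  and G21: "\<And>s t. ((\<lambda>s. G2 s t) has_vector_derivative G21 s t) (at s)"
  and c12: "isCont (\<lambda>z. G12 (fst z) (snd z)) (a,b)"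
  and c21: "isCont (\<lambda>z. G21 (fst z) (snd z)) (a,b)"
  shows "G12 a b = G21 a b"
proof (rule ccontr)
  assume ne: "G12 a b \<noteq> G21 a b"
  define e where "e = norm (G12 a b - G21 a b) / 4"
  have e: "e > 0" using ne by (simp add: e_def)
  obtain d1 where d1: "d1>0" "\<And>z. dist z (a,b) < d1 \<Longrightarrow> dist (G12 (fst z) (snd z)) (G12 a b) < e"
    using c12[unfolded continuous_at_eps_delta] e by fastforce
  obtain d2 where d2: "d2>0" "\<And>z. dist z (a,b) < d2 \<Longrightarrow> dist (G21 (fst z) (snd z)) (G21 a b) < e"
    using c21[unfolded continuous_at_eps_delta] e by fastforce
  define h where "h = min d1 d2 / 3"
  have h: "h > 0" using d1 d2 by (simp add: h_def)
  have near: "norm (G12 s t - G12 a b) \<le> e \<and> norm (G21 s t - G21 a b) \<le> e"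
    if "s \<in> {a..a+h}" "t \<in> {b..b+h}" for s t
  proof -
    have "dist (s,t) (a,b) \<le> \<bar>dist s a\<bar> + \<bar>dist t b\<bar>"
      unfolding dist_Pair_Pair by (rule sqrt_sum_squares_le_sum_abs)
    also have "\<dots> \<le> 2 * h" using that by (auto simp: dist_real_def)
    finally have "dist (s,t) (a,b) < min d1 d2" using h unfolding h_def by linarith
    thus ?thesis using d1(2)[of "(s,t)"] d2(2)[of "(s,t)"] by (simp add: dist_norm)
  qed
  define \<Delta> where "\<Delta> = G (a+h) (b+h) - G (a+h) b - G a (b+h) + G a b"
  have s1: "norm ((G1 s (b+h) - G1 s b) - h *\<^sub>R G12 a b) \<le> h * e" if "s \<in> {a..a+h}" for s
    using norm_increment_le[of b "b+h" "\<lambda>t. G1 s t" "G12 s"] h G12 near that by auto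
  have s2: "norm (\<Delta> - h *\<^sub>R (h *\<^sub>R G12 a b)) \<le> h * (h * e)"
  proof -
    have "norm ((G (a+h) (b+h) - G (a+h) b) - (G a (b+h) - G a b) - ((a+h) - a) *\<^sub>R (h *\<^sub>R G12 a b))
        \<le> ((a+h) - a) * (h * e)"
      by (rule norm_increment_le[of a "a+h" "\<lambda>s. G s (b+h) - G s b" "\<lambda>s. G1 s (b+h) - G1 s b"])
         (use h s1 in \<open>auto intro!: has_vector_derivative_diff G1\<close>)
    thus ?thesis by (simp add: \<Delta>_def algebra_simps)
  qed
  have t1: "norm ((G2 (a+h) t - G2 a t) - h *\<^sub>R G21 a b) \<le> h * e" if "t \<in> {b..b+h}" for t
    using norm_increment_le[of a "a+h" "\<lambda>s. G2 s t" "\<lambda>s. G21 s t"] h G21 near that by auto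
  have t2: "norm (\<Delta> - h *\<^sub>R (h *\<^sub>R G21 a b)) \<le> h * (h * e)"
  proof -
    have "norm ((G (a+h) (b+h) - G a (b+h)) - (G (a+h) b - G a b) - ((b+h) - b) *\<^sub>R (h *\<^sub>R G21 a b))
        \<le> ((b+h) - b) * (h * e)"
      by (rule norm_increment_le[of b "b+h" "\<lambda>t. G (a+h) t - G a t" "\<lambda>t. G2 (a+h) t - G2 a t"])
         (use h t1 in \<open>auto intro!: has_vector_derivative_diff G2\<close>)
    thus ?thesis by (simp add: \<Delta>_def algebra_simps)
  qed
  have "(h * h) * norm (G12 a b - G21 a b) = norm (h *\<^sub>R (h *\<^sub>R G12 a b) - h *\<^sub>R (h *\<^sub>R G21 a b))"
    using h by (simp add: scaleR_diff_right[symmetric])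
  also have "\<dots> \<le> norm (\<Delta> - h *\<^sub>R (h *\<^sub>R G21 a b)) + norm (\<Delta> - h *\<^sub>R (h *\<^sub>R G12 a b))"
    using norm_triangle_ineq4[of "\<Delta> - h *\<^sub>R (h *\<^sub>R G21 a b)" "\<Delta> - h *\<^sub>R (h *\<^sub>R G12 a b)"] by simp
  also have "\<dots> \<le> (h * h) * (2 * e)" using s2 t2 by simp
  finally have "norm (G12 a b - G21 a b) \<le> 2 * e" using h by simp
  thus False using e unfolding e_def by simp
qed

lemma isCont_comp_fun_upd2:
  assumes "continuous_on UNIV F"
  shows "isCont (\<lambda>z::real\<times>real. F (p(v := fst z, w := snd z))) z0"
proof -
  have "continuous_on UNIV (\<lambda>z::real\<times>real. p(v := fst z, w := snd z))"
  proof (rule continuous_on_coordinatewise_then_product)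
    fix i
    show "continuous_on UNIV (\<lambda>z::real\<times>real. (p(v := fst z, w := snd z)) i)"
      by (cases "i = w"; cases "i = v") (simp_all add: continuous_on_fst continuous_on_snd)
  qed
  hence "continuous_on UNIV (\<lambda>z::real\<times>real. F (p(v := fst z, w := snd z)))"
    using continuous_on_compose2[OF assms] by blast
  thus ?thesis using continuous_on_eq_continuous_at[OF open_UNIV] by blast
qed

lemma pder_commute:
  assumes f: "smooth_fn (f :: ('a, 'f::real_normed_vector) fn)"
  shows "pder v (pder w f) = pder w (pder v f)"
proof (cases "v = w")
  case False
  show ?thesis
  proof (rule ext)
    fix p :: "'a jvar \<Rightarrow> real"
    have tw: "p(v := s, w := t) = (p(w := t))(v := s)" for s t using False by (simp add: fun_upd_twist)
    have sf: "partially_differentiable f" "partially_differentiable (pder v f)"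
      "partially_differentiable (pder w f)"
      using f by (auto intro: smooth_fn_partially_differentiable smooth_fn_pder)
    have "pder w (pder v f) (p(v := p v, w := p w)) = pder v (pder w f) (p(v := p v, w := p w))"
    proof (rule mixed_partials_eq[of "\<lambda>s t. f (p(v := s, w := t))" "\<lambda>s t. pder v f (p(v := s, w := t))"
          "\<lambda>s t. pder w f (p(v := s, w := t))"])
      fix s t
      show "((\<lambda>s. f (p(v := s, w := t))) has_vector_derivative pder v f (p(v := s, w := t))) (at s)"
        "((\<lambda>s. pder w f (p(v := s, w := t))) has_vector_derivative
           pder v (pder w f) (p(v := s, w := t))) (at s)"
        unfolding tw by (intro partially_differentiable_has_vector_derivative sf)+
      show "((\<lambda>t. f (p(v := s, w := t))) has_vector_derivative pder w f (p(v := s, w := t))) (at t)"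
        "((\<lambda>t. pder v f (p(v := s, w := t))) has_vector_derivative
           pder w (pder v f) (p(v := s, w := t))) (at t)"
        by (intro partially_differentiable_has_vector_derivative sf)+
    qed (intro isCont_comp_fun_upd2 smooth_fn_continuous smooth_fn_pder f)+
    thus "pder v (pder w f) p = pder w (pder v f) p" by simp
  qed
qed simp

section \<open>The algebra \<open>\<A>\<close>\<close>

lemma depends_only_mono: "depends_only S f \<Longrightarrow> S \<subseteq> T \<Longrightarrow> depends_only T f"
  unfolding depends_only_def by blast

lemma depends_only_const: "depends_only S (\<lambda>p. c)"
  unfolding depends_only_def by simp

lemma depends_only_coord: "w \<in> S \<Longrightarrow> depends_only S (\<lambda>p. of_real (p w))"
  unfolding depends_only_def by simp

lemma depends_onlyD: "depends_only S f \<Longrightarrow> (\<forall>v\<in>S. p v = q v) \<Longrightarrow> f p = f q"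
  unfolding depends_only_def by blast

lemma depends_only_binop:
  assumes "depends_only S f" "depends_only S g"
  shows "depends_only S (\<lambda>p. h (f p) (g p))"
  unfolding depends_only_def
  using depends_onlyD[OF assms(1)] depends_onlyD[OF assms(2)] by metis

lemma depends_only_sum:
  "(\<And>x. x \<in> A \<Longrightarrow> depends_only S (F x)) \<Longrightarrow> depends_only S (\<lambda>p. \<Sum>x\<in>A. F x p)"
  unfolding depends_only_def by (auto intro!: sum.cong)

lemma pder_eq_zero_if_not_depends:
  assumes "depends_only S f" "v \<notin> S"
  shows "pder v f = (\<lambda>p. 0)"
proof (rule ext)
  fix p
  have "(\<lambda>t. f (p(v := t))) = (\<lambda>t. f p)"
    using assms by (intro ext depends_onlyD[OF assms(1)]) auto
  thus "pder v f p = 0" unfolding pder_def by simp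
qed

lemma depends_only_pder:
  assumes d: "depends_only S f"
  shows "depends_only S (pder v f)"
proof (cases "v \<in> S")
  case False
  show ?thesis unfolding pder_eq_zero_if_not_depends[OF d False] by (rule depends_only_const)
next
  case True
  show ?thesis unfolding depends_only_def
  proof (intro allI impI)
    fix p q :: "'a jvar \<Rightarrow> real" assume a: "\<forall>v\<in>S. p v = q v"
    have "(\<lambda>t. f (p(v := t))) = (\<lambda>t. f (q(v := t)))"
      using a by (intro ext depends_onlyD[OF d]) auto
    moreover have "p v = q v" using a True by blast
    ultimately show "pder v f p = pder v f q" unfolding pder_def by simp
  qed
qed

lemma AalgI:
  "smooth_fn f \<Longrightarrow> finite S \<Longrightarrow> (\<And>v. v \<in> S \<Longrightarrow> valid_var m v) \<Longrightarrow> depends_only S f \<Longrightarrow> f \<in> Aalg m"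
  unfolding Aalg_def by blast

lemma AalgE:
  assumes "f \<in> Aalg m"
  obtains S where "smooth_fn f" "finite S" "\<forall>v\<in>S. valid_var m v" "depends_only S f"
  using assms unfolding Aalg_def by blast

lemma Aalg_smooth_fn: "f \<in> Aalg m \<Longrightarrow> smooth_fn f"
  unfolding Aalg_def by blast

lemma Aalg_common_support:
  assumes "f \<in> Aalg m" "g \<in> Aalg m"
  obtains W where "finite W" "\<forall>v\<in>W. valid_var m v" "depends_only W f" "depends_only W g"
proof -
  obtain S where "finite S" "\<forall>v\<in>S. valid_var m v" "depends_only S f" using assms(1) by (rule AalgE)
  moreover obtain T where "finite T" "\<forall>v\<in>T. valid_var m v" "depends_only T g" using assms(2) by (rule AalgE)
  ultimately show ?thesis using that[of "S \<union> T"] by (auto intro: depends_only_mono)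
qed

lemma Aalg_binop:
  assumes "f \<in> Aalg m" "g \<in> Aalg m" "smooth_fn (\<lambda>p. h (f p) (g p))"
  shows "(\<lambda>p. h (f p) (g p)) \<in> Aalg m"
proof -
  obtain W where W: "finite W" "\<forall>v\<in>W. valid_var m v" "depends_only W f" "depends_only W g"
    using assms(1,2) by (rule Aalg_common_support)
  have "depends_only W (\<lambda>p. h (f p) (g p))" using W(3,4) by (rule depends_only_binop[where h=h])
  with W(1,2) assms(3) show ?thesis by (blast intro: AalgI)
qed

lemma Aalg_const: "(\<lambda>p. c) \<in> Aalg m"
  by (rule AalgI[of _ "{}"]) (auto simp: smooth_fn_const depends_only_const)

lemma Aalg_add: "f \<in> Aalg m \<Longrightarrow> g \<in> Aalg m \<Longrightarrow> (\<lambda>p. f p + g p) \<in> Aalg m"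
  by (rule Aalg_binop[where h="(+)"]) (auto intro: smooth_fn_add Aalg_smooth_fn)

lemma Aalg_diff: "f \<in> Aalg m \<Longrightarrow> g \<in> Aalg m \<Longrightarrow> (\<lambda>p. f p - g p :: 'f::real_normed_field) \<in> Aalg m"
  by (rule Aalg_binop[where h="(-)"]) (auto intro: smooth_fn_diff Aalg_smooth_fn)

lemma Aalg_mult: "f \<in> Aalg m \<Longrightarrow> g \<in> Aalg m \<Longrightarrow> (\<lambda>p. f p * g p :: 'f::real_normed_field) \<in> Aalg m"
  by (rule Aalg_binop[where h="times"]) (auto intro: smooth_fn_mult Aalg_smooth_fn)

lemma Aalg_sum: "finite A \<Longrightarrow> (\<And>x. x \<in> A \<Longrightarrow> F x \<in> Aalg m) \<Longrightarrow> (\<lambda>p. \<Sum>x\<in>A. F x p) \<in> Aalg m"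
  by (induction A rule: finite_induct) (simp_all add: Aalg_const Aalg_add)

section \<open>Total derivatives\<close>

text \<open>The sum defining \<open>Dtot\<close> ranges over a set depending on \<open>f\<close>; rewriting it as a sum over any
  finite superset of the support of \<open>f\<close> lets several functions be treated with one operator.\<close>

definition first_order_op ::
  "'a jvar set \<Rightarrow> ('a jvar \<Rightarrow> ('a, 'f) fn) \<Rightarrow> ('a, 'f::real_normed_field) fn \<Rightarrow> ('a, 'f) fn" where
  "first_order_op W a f = (\<lambda>p. \<Sum>v\<in>W. a v p * pder v f p)"

definition Dtot_coeff :: "nat \<Rightarrow> 'a jvar \<Rightarrow> ('a, 'f::real_normed_field) fn" where
  "Dtot_coeff \<mu> v = (case v of
      Xv \<nu> \<Rightarrow> (\<lambda>p. if \<nu> = \<mu> then 1 else 0)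
    | Uv \<alpha> i \<Rightarrow> (\<lambda>p. of_real (p (Uv \<alpha> (incr i \<mu>)))))"

definition shift_var :: "nat \<Rightarrow> 'a jvar \<Rightarrow> 'a jvar" where
  "shift_var \<mu> v = (case v of Xv \<nu> \<Rightarrow> Xv \<nu> | Uv \<alpha> i \<Rightarrow> Uv \<alpha> (incr i \<mu>))"

lemma smooth_fn_Dtot_coeff: "smooth_fn (Dtot_coeff \<mu> v)"
  by (cases v) (auto simp: Dtot_coeff_def smooth_fn_const smooth_fn_coord)

lemma depends_only_Dtot_coeff: "depends_only {shift_var \<mu> v} (Dtot_coeff \<mu> v)"
  by (cases v) (auto simp: Dtot_coeff_def shift_var_def depends_only_const depends_only_coord)

lemma incr_in_multi_idx: "i \<in> multi_idx m \<Longrightarrow> \<mu> < m \<Longrightarrow> incr i \<mu> \<in> multi_idx m"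
  unfolding multi_idx_def incr_def by auto

lemma valid_var_shift_var: "valid_var m v \<Longrightarrow> \<mu> < m \<Longrightarrow> valid_var m (shift_var \<mu> v)"
  by (cases v) (auto simp: shift_var_def valid_var_def incr_in_multi_idx)

lemma incr_commute: "incr (incr i \<nu>) \<mu> = incr (incr i \<mu>) \<nu>"
  unfolding incr_def by (cases "\<mu> = \<nu>") (auto simp: fun_upd_twist)

lemma first_order_op_cong_support:
  assumes "finite W" "finite W'"
    and "\<And>v. v \<in> W - W' \<Longrightarrow> a v p * pder v f p = 0" "\<And>v. v \<in> W' - W \<Longrightarrow> a v p * pder v f p = 0"
  shows "first_order_op W a f p = first_order_op W' a f p"
proof -
  have "(\<Sum>v\<in>W. a v p * pder v f p) = (\<Sum>v\<in>W \<union> W'. a v p * pder v f p)"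
    by (rule sum.mono_neutral_left) (use assms in auto)
  also have "\<dots> = (\<Sum>v\<in>W'. a v p * pder v f p)"
    by (rule sum.mono_neutral_right) (use assms in auto)
  finally show ?thesis unfolding first_order_op_def .
qed

lemma Dtot_eq_first_order_op:
  fixes f :: "('a, 'f::real_normed_field) fn"
  assumes d: "depends_only S f" and vS: "\<forall>v\<in>S. valid_var m v" and W: "finite W" "S \<subseteq> W"
  shows "Dtot m \<mu> f = first_order_op W (Dtot_coeff \<mu>) f"
proof (rule ext)
  fix p
  define B where "B = {(\<alpha>, i). i \<in> multi_idx m \<and> pder (Uv \<alpha> i) f \<noteq> (\<lambda>_. 0)}"
  define U where "U = insert (Xv \<mu>) ((\<lambda>(\<alpha>, i). Uv \<alpha> i) ` B)"
  have zero: "pder v f = (\<lambda>_. 0)" if "v \<notin> S" for v by (rule pder_eq_zero_if_not_depends[OF d that])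
  have BS: "(\<lambda>(\<alpha>, i). Uv \<alpha> i) ` B \<subseteq> S" using zero unfolding B_def by auto
  have inj: "inj (\<lambda>(\<alpha>, i). Uv \<alpha> i)" by (auto simp: inj_def)
  have fB: "finite B"
    using finite_subset[OF BS finite_subset[OF W(2,1)]] by (rule finite_imageD) (rule inj_on_subset[OF inj subset_UNIV])
  have "Dtot m \<mu> f p = pder (Xv \<mu>) f p +
      (\<Sum>(\<alpha>, i)\<in>B. of_real (p (Uv \<alpha> (incr i \<mu>))) * pder (Uv \<alpha> i) f p)"
    unfolding Dtot_def B_def by simp
  also have "\<dots> = Dtot_coeff \<mu> (Xv \<mu>) p * pder (Xv \<mu>) f p +
      (\<Sum>v\<in>(\<lambda>(\<alpha>, i). Uv \<alpha> i) ` B. Dtot_coeff \<mu> v p * pder v f p)"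
    by (subst sum.reindex[OF inj_on_subset[OF inj subset_UNIV]]) (simp add: case_prod_unfold Dtot_coeff_def)
  also have "\<dots> = first_order_op U (Dtot_coeff \<mu>) f p"
    unfolding U_def first_order_op_def using fB by (subst sum.insert) auto
  also have "\<dots> = first_order_op W (Dtot_coeff \<mu>) f p"
  proof (rule first_order_op_cong_support)
    show "finite U" "finite W" using fB W(1) by (simp_all add: U_def)
    show "Dtot_coeff \<mu> v p * pder v f p = 0" if "v \<in> U - W" for v
    proof -
      have "v \<notin> S" using that BS W(2) by (auto simp: U_def)
      thus ?thesis by (simp add: zero)
    qed
    show "Dtot_coeff \<mu> v p * pder v f p = 0" if v: "v \<in> W - U" for v
    proof (cases v)
      case (Xv \<nu>)
      with v have "\<nu> \<noteq> \<mu>" by (auto simp: U_def)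
      thus ?thesis using Xv by (simp add: Dtot_coeff_def)
    next
      case (Uv \<alpha> i)
      have "(\<alpha>, i) \<notin> B" using v Uv by (auto simp: U_def)
      moreover have "i \<in> multi_idx m" if "v \<in> S" using that vS Uv by (auto simp: valid_var_def)
      ultimately have "pder v f = (\<lambda>_. 0)" using zero Uv unfolding B_def by auto
      thus ?thesis by simp
    qed
  qed
  finally show "Dtot m \<mu> f p = first_order_op W (Dtot_coeff \<mu>) f p" .
qed

lemma smooth_fn_first_order_op:
  "finite W \<Longrightarrow> (\<And>v. v \<in> W \<Longrightarrow> smooth_fn (a v)) \<Longrightarrow> smooth_fn f \<Longrightarrow> smooth_fn (first_order_op W a f)"
  unfolding first_order_op_def by (intro smooth_fn_sum smooth_fn_mult smooth_fn_pder) auto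

lemma depends_only_first_order_op:
  "(\<And>v. v \<in> W \<Longrightarrow> depends_only T (a v)) \<Longrightarrow> depends_only T f \<Longrightarrow> depends_only T (first_order_op W a f)"
  unfolding first_order_op_def
  by (intro depends_only_sum depends_only_binop[where h=times] depends_only_pder) auto

lemma first_order_op_diff:
  "smooth_fn f \<Longrightarrow> smooth_fn g \<Longrightarrow>
   first_order_op W a (\<lambda>p. f p - g p) = (\<lambda>p. first_order_op W a f p - first_order_op W a g p)"
  unfolding first_order_op_def
  by (simp add: pder_diff smooth_fn_partially_differentiable right_diff_distrib sum_subtractf)

lemma first_order_op_cmult:
  "smooth_fn f \<Longrightarrow> first_order_op W a (\<lambda>p. c * f p) = (\<lambda>p. c * first_order_op W a f p)"
  unfolding first_order_op_def by (simp add: pder_cmult sum_distrib_left mult.left_commute)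

lemma Dtot_zero: "Dtot m \<mu> (\<lambda>p. 0) = (\<lambda>p. 0)"
  unfolding Dtot_def by (simp add: pder_const)

lemma depends_only_Dtot:
  assumes "depends_only S f" "\<forall>v\<in>S. valid_var m v" "finite S"
  shows "depends_only (S \<union> shift_var \<mu> ` S) (Dtot m \<mu> f)"
  unfolding Dtot_eq_first_order_op[OF assms order_refl]
  by (rule depends_only_first_order_op)
     (auto intro: depends_only_mono[OF depends_only_Dtot_coeff] depends_only_mono[OF assms(1)])

lemma Dtot_Aalg:
  assumes f: "f \<in> Aalg m" and \<mu>: "\<mu> < m"
  shows "Dtot m \<mu> f \<in> Aalg m"
proof -
  obtain S where "smooth_fn f" "finite S" "\<forall>v\<in>S. valid_var m v" "depends_only S f"
    using f by (rule AalgE)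
  moreover have "smooth_fn (Dtot m \<mu> f)"
    unfolding Dtot_eq_first_order_op[OF calculation(4,3,2) order_refl]
    using calculation by (intro smooth_fn_first_order_op smooth_fn_Dtot_coeff)
  ultimately show ?thesis
    using \<mu> by (intro AalgI[of _ "S \<union> shift_var \<mu> ` S"] depends_only_Dtot)
      (auto intro: valid_var_shift_var)
qed

lemma Dtot_diff:
  assumes f: "f \<in> Aalg m" and g: "g \<in> Aalg m"
  shows "Dtot m \<mu> (\<lambda>p. f p - g p) = (\<lambda>p. Dtot m \<mu> f p - Dtot m \<mu> g p)"
proof -
  obtain W where W: "finite W" "\<forall>v\<in>W. valid_var m v" "depends_only W f" "depends_only W g"
    using f g by (rule Aalg_common_support)
  have "depends_only W (\<lambda>p. f p - g p)" using W(3,4) by (rule depends_only_binop[where h=minus])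
  thus ?thesis
    using W f g by (simp add: Dtot_eq_first_order_op[of W] first_order_op_diff Aalg_smooth_fn)
qed

lemma Dtot_cmult:
  assumes f: "f \<in> Aalg m"
  shows "Dtot m \<mu> (\<lambda>p. c * f p) = (\<lambda>p. c * Dtot m \<mu> f p)"
proof -
  obtain W where W: "smooth_fn f" "finite W" "\<forall>v\<in>W. valid_var m v" "depends_only W f"
    using f by (rule AalgE)
  have "depends_only W (\<lambda>p. c * f p)"
    using depends_only_const W(4) by (rule depends_only_binop[where h=times])
  thus ?thesis using W by (simp add: Dtot_eq_first_order_op[of W] first_order_op_cmult)
qed

lemma first_order_op_compose:
  assumes W: "finite W" and a: "\<And>v. v \<in> W \<Longrightarrow> smooth_fn (a v)" and b: "\<And>v. v \<in> W \<Longrightarrow> smooth_fn (b v)"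
    and f: "smooth_fn (f :: ('a, 'f::real_normed_field) fn)"
  shows "first_order_op W a (first_order_op W b f) p =
      (\<Sum>v\<in>W. first_order_op W a (b v) p * pder v f p)
      + (\<Sum>w\<in>W. \<Sum>v\<in>W. a w p * (b v p * pder w (pder v f) p))"
proof -
  have inner: "pder w (first_order_op W b f) p =
      (\<Sum>v\<in>W. b v p * pder w (pder v f) p + pder w (b v) p * pder v f p)" for w
  proof -
    have "pder w (first_order_op W b f) = (\<lambda>p. \<Sum>v\<in>W. pder w (\<lambda>q. b v q * pder v f q) p)"
      unfolding first_order_op_def using W b f
      by (intro pder_sum) (auto intro: smooth_fn_mult smooth_fn_pder)
    thus ?thesis using b f by (simp add: pder_mult smooth_fn_partially_differentiable smooth_fn_pder)
  qed
  have "first_order_op W a (first_order_op W b f) p =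
      (\<Sum>w\<in>W. a w p * (\<Sum>v\<in>W. b v p * pder w (pder v f) p + pder w (b v) p * pder v f p))"
    unfolding first_order_op_def[of W a] using inner by simp
  also have "\<dots> = (\<Sum>w\<in>W. \<Sum>v\<in>W. a w p * (b v p * pder w (pder v f) p))
      + (\<Sum>w\<in>W. \<Sum>v\<in>W. a w p * pder w (b v) p * pder v f p)"
    by (simp add: sum_distrib_left distrib_left sum.distrib mult.assoc)
  also have "(\<Sum>w\<in>W. \<Sum>v\<in>W. a w p * pder w (b v) p * pder v f p)
      = (\<Sum>v\<in>W. first_order_op W a (b v) p * pder v f p)"
    unfolding first_order_op_def by (subst sum.swap) (simp add: sum_distrib_right)
  finally show ?thesis by simp
qed

lemma first_order_op_Dtot_coeff:
  assumes "shift_var \<nu> v \<in> W" "finite W"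
  shows "first_order_op W (Dtot_coeff \<mu>) (Dtot_coeff \<nu> v) p =
    (case v of Xv _ \<Rightarrow> 0 | Uv \<alpha> i \<Rightarrow> of_real (p (Uv \<alpha> (incr (incr i \<nu>) \<mu>))))"
proof (cases v)
  case (Xv \<kappa>)
  thus ?thesis unfolding first_order_op_def Dtot_coeff_def[of \<nu>] by (simp add: pder_const)
next
  case (Uv \<alpha> i)
  have u: "Uv \<alpha> (incr i \<nu>) \<in> W" using assms Uv by (simp add: shift_var_def)
  have "first_order_op W (Dtot_coeff \<mu>) (Dtot_coeff \<nu> v) p =
      (\<Sum>w\<in>W. if w = Uv \<alpha> (incr i \<nu>) then Dtot_coeff \<mu> w p else 0)"
    unfolding first_order_op_def Dtot_coeff_def[of \<nu>] Uv by (intro sum.cong) (auto simp: pder_coord)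
  also have "\<dots> = Dtot_coeff \<mu> (Uv \<alpha> (incr i \<nu>)) p" using u assms(2) by simp
  finally show ?thesis using Uv by (simp add: Dtot_coeff_def)
qed

text \<open>Expanding \<open>D\<^sub>\<mu> D\<^sub>\<nu> f\<close> by \<open>first_order_op_compose\<close>, the first order terms are symmetric
  because shifts of multi-indices commute, the second order ones because mixed partials do.\<close>

lemma Dtot_commute:
  fixes f :: "('a, 'f::real_normed_field) fn"
  assumes f: "f \<in> Aalg m" and \<mu>: "\<mu> < m" and \<nu>: "\<nu> < m"
  shows "Dtot m \<mu> (Dtot m \<nu> f) = Dtot m \<nu> (Dtot m \<mu> f)"
proof -
  obtain S where sf: "smooth_fn f" and fS: "finite S" and vS: "\<forall>v\<in>S. valid_var m v"
    and d: "depends_only S f"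
    using f by (rule AalgE)
  define W where "W = S \<union> shift_var \<mu> ` S \<union> shift_var \<nu> ` S"
  have fW: "finite W" using fS unfolding W_def by simp
  have vW: "\<forall>v\<in>W. valid_var m v" using vS \<mu> \<nu> valid_var_shift_var unfolding W_def by auto
  have D: "Dtot m \<kappa> f = first_order_op W (Dtot_coeff \<kappa>) f" for \<kappa>
    by (rule Dtot_eq_first_order_op[OF d vS fW]) (auto simp: W_def)
  have DD: "Dtot m \<kappa> (Dtot m \<iota> f) = first_order_op W (Dtot_coeff \<kappa>) (first_order_op W (Dtot_coeff \<iota>) f)"
    if "\<iota> \<in> {\<mu>, \<nu>}" for \<kappa> \<iota>
  proof -
    have "depends_only W (Dtot m \<iota> f)"
      by (rule depends_only_mono[OF depends_only_Dtot[OF d vS fS]]) (use that in \<open>auto simp: W_def\<close>)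
    thus ?thesis unfolding D[symmetric] by (rule Dtot_eq_first_order_op[OF _ vW fW order_refl])
  qed
  have first: "(\<Sum>v\<in>W. first_order_op W (Dtot_coeff \<mu>) (Dtot_coeff \<nu> v) p * pder v f p) =
      (\<Sum>v\<in>W. first_order_op W (Dtot_coeff \<nu>) (Dtot_coeff \<mu> v) p * pder v f p)" for p
  proof (rule sum.cong[OF refl])
    fix v
    show "first_order_op W (Dtot_coeff \<mu>) (Dtot_coeff \<nu> v) p * pder v f p =
        first_order_op W (Dtot_coeff \<nu>) (Dtot_coeff \<mu> v) p * pder v f p"
    proof (cases "v \<in> S")
      case False thus ?thesis by (simp add: pder_eq_zero_if_not_depends[OF d False])
    next
      case True
      hence "shift_var \<nu> v \<in> W" "shift_var \<mu> v \<in> W" unfolding W_def by auto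
      thus ?thesis using fW by (simp add: first_order_op_Dtot_coeff incr_commute split: jvar.split)
    qed
  qed
  have second: "(\<Sum>w\<in>W. \<Sum>v\<in>W. Dtot_coeff \<mu> w p * (Dtot_coeff \<nu> v p * pder w (pder v f) p)) =
      (\<Sum>w\<in>W. \<Sum>v\<in>W. Dtot_coeff \<nu> w p * (Dtot_coeff \<mu> v p * pder w (pder v f) p))" for p
    by (subst sum.swap) (simp add: pder_commute[OF sf] mult.left_commute)
  show ?thesis
    using first second
    by (simp add: DD fun_eq_iff first_order_op_compose[OF fW smooth_fn_Dtot_coeff smooth_fn_Dtot_coeff sf])
qed

lemma Dtot_pow_Aalg: "f \<in> Aalg m \<Longrightarrow> \<mu> < m \<Longrightarrow> (Dtot m \<mu> ^^ n) f \<in> Aalg m"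
  by (induction n) (auto intro: Dtot_Aalg)

lemma Dtot_Dtot_pow_commute:
  "f \<in> Aalg m \<Longrightarrow> \<mu> < m \<Longrightarrow> \<nu> < m \<Longrightarrow> Dtot m \<mu> ((Dtot m \<nu> ^^ n) f) = (Dtot m \<nu> ^^ n) (Dtot m \<mu> f)"
proof (induction n)
  case (Suc n)
  have "Dtot m \<mu> (Dtot m \<nu> ((Dtot m \<nu> ^^ n) f)) = Dtot m \<nu> (Dtot m \<mu> ((Dtot m \<nu> ^^ n) f))"
    using Suc.prems by (intro Dtot_commute Dtot_pow_Aalg)
  thus ?case using Suc by simp
qed simp

abbreviation Dmulti_list :: "nat \<Rightarrow> nat list \<Rightarrow> (nat \<Rightarrow> nat) \<Rightarrow> ('a, 'f::real_normed_field) fn \<Rightarrow> ('a, 'f) fn" where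
  "Dmulti_list m ls j \<equiv> foldr (\<lambda>\<mu> g. (Dtot m \<mu> ^^ j \<mu>) \<circ> g) ls id"

lemma Dmulti_list_Cons: "Dmulti_list m (\<nu> # ls) j f = (Dtot m \<nu> ^^ j \<nu>) (Dmulti_list m ls j f)"
  by simp

lemma Dmulti_list_Aalg: "set ls \<subseteq> {..<m} \<Longrightarrow> f \<in> Aalg m \<Longrightarrow> Dmulti_list m ls j f \<in> Aalg m"
  by (induction ls) (auto intro: Dtot_pow_Aalg)

lemma Dmulti_list_cong: "(\<And>\<nu>. \<nu> \<in> set ls \<Longrightarrow> j \<nu> = j' \<nu>) \<Longrightarrow> Dmulti_list m ls j f = Dmulti_list m ls j' f"
  by (induction ls) auto

lemma Dtot_Dmulti_list:
  "distinct ls \<Longrightarrow> set ls \<subseteq> {..<m} \<Longrightarrow> \<mu> \<in> set ls \<Longrightarrow> f \<in> Aalg m \<Longrightarrow>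
   Dtot m \<mu> (Dmulti_list m ls j f) = Dmulti_list m ls (incr j \<mu>) f"
proof (induction ls)
  case (Cons \<nu> ls)
  show ?case
  proof (cases "\<nu> = \<mu>")
    case True
    hence "Dmulti_list m ls (incr j \<mu>) f = Dmulti_list m ls j f"
      using Cons.prems by (intro Dmulti_list_cong) (auto simp: incr_def)
    moreover have "incr j \<mu> \<mu> = Suc (j \<mu>)" by (simp add: incr_def)
    ultimately have "(Dtot m \<mu> ^^ incr j \<mu> \<mu>) (Dmulti_list m ls (incr j \<mu>) f) =
        Dtot m \<mu> ((Dtot m \<mu> ^^ j \<mu>) (Dmulti_list m ls j f))"
      by simp
    thus ?thesis using True by (simp only: Dmulti_list_Cons)
  next
    case False
    have "Dtot m \<mu> (Dmulti_list m (\<nu> # ls) j f) = (Dtot m \<nu> ^^ j \<nu>) (Dtot m \<mu> (Dmulti_list m ls j f))"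
      using Cons.prems by (simp only: Dmulti_list_Cons) (intro Dtot_Dtot_pow_commute Dmulti_list_Aalg, auto)
    also have "\<dots> = (Dtot m \<nu> ^^ j \<nu>) (Dmulti_list m ls (incr j \<mu>) f)"
      using Cons.prems False by (subst Cons.IH) auto
    also have "\<dots> = Dmulti_list m (\<nu> # ls) (incr j \<mu>) f" using False by (simp add: incr_def)
    finally show ?thesis .
  qed
qed simp

lemma Dmulti_eq_Dmulti_list: "Dmulti m j = Dmulti_list m [0..<m] j"
  unfolding Dmulti_def by simp

lemma Dmulti_Aalg: "f \<in> Aalg m \<Longrightarrow> Dmulti m j f \<in> Aalg m"
  unfolding Dmulti_eq_Dmulti_list by (rule Dmulti_list_Aalg) auto

lemma Dtot_Dmulti: "\<mu> < m \<Longrightarrow> f \<in> Aalg m \<Longrightarrow> Dtot m \<mu> (Dmulti m j f) = Dmulti m (incr j \<mu>) f"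
  unfolding Dmulti_eq_Dmulti_list by (rule Dtot_Dmulti_list) auto

lemma Dmulti_zero_index: "Dmulti m (\<lambda>_. 0) f = f"
proof -
  have "Dmulti_list m ls (\<lambda>_. 0) f = f" for ls by (induction ls) auto
  thus ?thesis unfolding Dmulti_eq_Dmulti_list .
qed

section \<open>Multi-indices\<close>

lemma mabs_incr:
  assumes "\<mu> < m"
  shows "mabs m (incr i \<mu>) = Suc (mabs m i)"
proof -
  have "(\<Sum>\<nu>\<in>{..<m} - {\<mu>}. incr i \<mu> \<nu>) = (\<Sum>\<nu>\<in>{..<m} - {\<mu>}. i \<nu>)"
    by (rule sum.cong) (auto simp: incr_def)
  thus ?thesis using assms unfolding mabs_def by (simp add: sum.remove[of "{..<m}" \<mu>] incr_def)
qed

lemma incr_decrement: "0 < i \<mu> \<Longrightarrow> incr (i(\<mu> := i \<mu> - 1)) \<mu> = i"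
  unfolding incr_def by (auto simp: fun_eq_iff)

lemma fun_upd_in_multi_idx: "i \<in> multi_idx m \<Longrightarrow> \<mu> < m \<Longrightarrow> i(\<mu> := n) \<in> multi_idx m"
  unfolding multi_idx_def by auto

lemma mabs_less_if_mle:
  assumes "k \<in> multi_idx m" "i \<in> multi_idx m" "mle m k i" "k \<noteq> i"
  shows "mabs m k < mabs m i"
proof -
  obtain \<nu> where "k \<nu> \<noteq> i \<nu>" using assms(4) by (auto simp: fun_eq_iff)
  moreover have "\<nu> < m" using assms(1,2) calculation unfolding multi_idx_def by (cases "\<nu> < m") auto
  ultimately have "\<exists>\<nu>\<in>{..<m}. k \<nu> < i \<nu>" using assms(3) unfolding mle_def by force
  thus ?thesis unfolding mabs_def using assms(3) unfolding mle_def by (intro sum_strict_mono_ex1) auto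
qed

lemma finite_Kset: "finite (Kset m q)"
proof (rule finite_subset)
  show "Kset m q \<subseteq> (\<lambda>k. \<lambda>\<nu>. if \<nu> < m then k \<nu> else 0) ` ({..<m} \<rightarrow>\<^sub>E {..q})"
  proof
    fix k assume k: "k \<in> Kset m q"
    have "k \<nu> \<le> q" if "\<nu> < m" for \<nu>
      using k that member_le_sum[of \<nu> "{..<m}" k] by (auto simp: Kset_def mabs_def)
    hence "restrict k {..<m} \<in> {..<m} \<rightarrow>\<^sub>E {..q}" by auto
    moreover have "k = (\<lambda>\<nu>. if \<nu> < m then restrict k {..<m} \<nu> else 0)"
      using k by (auto simp: Kset_def multi_idx_def fun_eq_iff)
    ultimately show "k \<in> (\<lambda>k. \<lambda>\<nu>. if \<nu> < m then k \<nu> else 0) ` ({..<m} \<rightarrow>\<^sub>E {..q})" by blast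
  qed
qed (intro finite_imageI finite_PiE; simp)

lemma mchoose_eq_0_iff: "mchoose m i k = 0 \<longleftrightarrow> \<not> mle m k i"
  unfolding mchoose_def mle_def by (auto simp: binomial_eq_0_iff not_le)

lemma mchoose_incr:
  assumes "\<mu> < m"
  shows "mchoose m (incr i \<mu>) k =
    mchoose m i k + (if k \<mu> = 0 then 0 else mchoose m i (k(\<mu> := k \<mu> - 1)))"
proof -
  define R where "R = (\<Prod>\<nu>\<in>{..<m} - {\<mu>}. i \<nu> choose k \<nu>)"
  have split: "mchoose m j k' = (j \<mu> choose k' \<mu>) * R"
    if "\<forall>\<nu>. \<nu> \<noteq> \<mu> \<longrightarrow> j \<nu> = i \<nu> \<and> k' \<nu> = k \<nu>" for j k'
  proof -
    have "(\<Prod>\<nu>\<in>{..<m} - {\<mu>}. j \<nu> choose k' \<nu>) = R" unfolding R_def using that by (intro prod.cong) auto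
    thus ?thesis unfolding mchoose_def using assms by (simp add: prod.remove[of "{..<m}" \<mu>])
  qed
  show ?thesis
  proof (cases "k \<mu>")
    case (Suc r)
    thus ?thesis by (simp add: split incr_def algebra_simps)
  qed (simp add: split incr_def)
qed

lemma msub_incr: "k \<mu> \<le> i \<mu> \<Longrightarrow> msub (incr i \<mu>) k = incr (msub i k) \<mu>"
  unfolding msub_def incr_def by (auto simp: fun_eq_iff)

lemma msub_decrement: "0 < k \<mu> \<Longrightarrow> msub i (k(\<mu> := k \<mu> - 1)) = msub (incr i \<mu>) k"
  unfolding msub_def incr_def by (auto simp: fun_eq_iff)

section \<open>The operators \<open>\<epsilon>\<^sup>k\<^sub>\<phi>\<close>\<close>

text \<open>For \<open>k \<not>\<le> i\<close> the binomial coefficient vanishes, so the case distinction in the definition of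
  \<open>eps\<close> can be dropped (the truncated difference \<open>msub i k\<close> is then irrelevant).\<close>

lemma eps_eq:
  "i \<in> multi_idx m \<Longrightarrow> eps m k \<phi> \<alpha> i = (\<lambda>p. of_nat (mchoose m i k) * Dmulti m (msub i k) (\<phi> \<alpha>) p)"
  unfolding eps_def using mchoose_eq_0_iff[of m i k] by auto

lemma eps_self: "i \<in> multi_idx m \<Longrightarrow> eps m i \<phi> \<alpha> i = \<phi> \<alpha>"
  unfolding eps_def mle_def mchoose_def msub_def by (simp add: Dmulti_zero_index)

lemma eps_eq_0_if_not_mle: "\<not> mle m k i \<Longrightarrow> eps m k \<phi> \<alpha> i = (\<lambda>_. 0)"
  unfolding eps_def by simp

lemma eps_VD: "(\<And>\<alpha>. \<phi> \<alpha> \<in> Aalg m) \<Longrightarrow> eps m k \<phi> \<in> VD m"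
  unfolding VD_def eps_def by (auto intro!: Aalg_mult Aalg_const Dmulti_Aalg Aalg_const[of 0])

text \<open>The Pascal rule \<open>mchoose_incr\<close> is what makes \<open>[D\<^sub>\<mu>, \<epsilon>\<^sup>k\<^sub>\<phi>] = -\<epsilon>\<^sup>k\<^sup>-\<^sup>(\<^sup>\<mu>\<^sup>)\<^sub>\<phi>\<close>.\<close>

lemma bracket_eps:
  fixes \<phi> :: "'a \<Rightarrow> ('a, 'f::real_normed_field) fn"
  assumes \<mu>: "\<mu> < m" and \<phi>: "\<And>\<alpha>. \<phi> \<alpha> \<in> Aalg m"
  shows "bracket m \<mu> (eps m k \<phi>) \<alpha> i p =
    (if k \<mu> = 0 then 0 else - eps m (k(\<mu> := k \<mu> - 1)) \<phi> \<alpha> i p)"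
proof (cases "i \<in> multi_idx m")
  case False thus ?thesis by (simp add: bracket_def eps_def)
next
  case i: True
  define X where "X = Dmulti m (msub (incr i \<mu>) k) (\<phi> \<alpha>) p"
  have "of_nat (mchoose m i k) * Dtot m \<mu> (Dmulti m (msub i k) (\<phi> \<alpha>)) p =
      of_nat (mchoose m i k) * (X :: 'f)"
  proof (cases "mle m k i")
    case True
    hence "msub (incr i \<mu>) k = incr (msub i k) \<mu>" using \<mu> by (intro msub_incr) (simp add: mle_def)
    thus ?thesis unfolding X_def using \<mu> \<phi> by (simp add: Dtot_Dmulti)
  qed (simp add: mchoose_eq_0_iff)
  hence "Dtot m \<mu> (eps m k \<phi> \<alpha> i) p = of_nat (mchoose m i k) * X"
    using i \<phi> by (simp add: eps_eq Dtot_cmult Dmulti_Aalg)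
  moreover have "eps m k \<phi> \<alpha> (incr i \<mu>) p = of_nat (mchoose m (incr i \<mu>) k) * X"
    using i \<mu> by (simp add: eps_eq incr_in_multi_idx X_def)
  moreover have "eps m (k(\<mu> := k \<mu> - 1)) \<phi> \<alpha> i p = of_nat (mchoose m i (k(\<mu> := k \<mu> - 1))) * X"
    if "k \<mu> \<noteq> 0"
  proof -
    have "msub i (k(\<mu> := k \<mu> - 1)) = msub (incr i \<mu>) k" using that by (intro msub_decrement) simp
    thus ?thesis unfolding eps_eq[OF i] X_def by simp
  qed
  ultimately show ?thesis
    using i \<mu> by (simp add: bracket_def mchoose_incr algebra_simps)
qed

section \<open>The spaces \<open>\<E>\<^sup>(\<^sup>q\<^sup>)\<close>\<close>

lemma bracket_zero: "bracket m \<mu> (\<lambda>\<alpha> i p. 0 :: 'f::real_normed_field) = (\<lambda>\<alpha> i p. 0)"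
  unfolding bracket_def by (auto simp: Dtot_zero fun_eq_iff)

lemma VD_zero: "(\<lambda>\<alpha> i p. 0) \<in> VD m"
  unfolding VD_def using Aalg_const[of 0] by auto

lemma Epre_zero: "(\<lambda>\<alpha> i p. 0 :: 'f::real_normed_field) \<in> Epre m q"
  by (induction q) (auto simp: VD_zero bracket_zero)

lemma VD_diff:
  "\<zeta> \<in> VD m \<Longrightarrow> \<eta> \<in> VD m \<Longrightarrow> (\<lambda>\<alpha> i p. \<zeta> \<alpha> i p - \<eta> \<alpha> i p :: 'f::real_normed_field) \<in> VD m"
  unfolding VD_def by (auto intro: Aalg_diff)

lemma bracket_diff:
  assumes "\<zeta> \<in> VD m" "\<eta> \<in> VD m"
  shows "bracket m \<mu> (\<lambda>\<alpha> i p. \<zeta> \<alpha> i p - \<eta> \<alpha> i p :: 'f::real_normed_field) =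
         (\<lambda>\<alpha> i p. bracket m \<mu> \<zeta> \<alpha> i p - bracket m \<mu> \<eta> \<alpha> i p)"
  using assms unfolding bracket_def VD_def by (auto simp: Dtot_diff fun_eq_iff)

lemma Epre_diff:
  "\<zeta> \<in> Epre m q \<Longrightarrow> \<eta> \<in> Epre m q \<Longrightarrow> (\<lambda>\<alpha> i p. \<zeta> \<alpha> i p - \<eta> \<alpha> i p :: 'f::real_normed_field) \<in> Epre m q"
proof (induction q arbitrary: \<zeta> \<eta>)
  case (Suc q)
  hence "\<zeta> \<in> VD m" "\<eta> \<in> VD m" by auto
  with Suc show ?case by (simp add: VD_diff bracket_diff)
qed simp

lemma Epre_uminus: "\<zeta> \<in> Epre m q \<Longrightarrow> (\<lambda>\<alpha> i p. - \<zeta> \<alpha> i p :: 'f::real_normed_field) \<in> Epre m q"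
  using Epre_diff[OF Epre_zero, of \<zeta> m q] by simp

lemma Epre_sum:
  assumes "finite K" "\<And>k. k \<in> K \<Longrightarrow> F k \<in> Epre m q"
  shows "(\<lambda>\<alpha> i p. \<Sum>k\<in>K. F k \<alpha> i p :: 'f::real_normed_field) \<in> Epre m q"
  using assms
proof (induction K rule: finite_induct)
  case (insert x K)
  thus ?case using Epre_diff[OF _ Epre_uminus, of "F x" m q "\<lambda>\<alpha> i p. \<Sum>k\<in>K. F k \<alpha> i p"] by simp
qed (simp add: Epre_zero)

lemma eps_in_Epre:
  fixes \<phi> :: "'a \<Rightarrow> ('a, 'f::real_normed_field) fn"
  assumes \<phi>: "\<And>\<alpha>. \<phi> \<alpha> \<in> Aalg m"
  shows "k \<in> multi_idx m \<Longrightarrow> mabs m k \<le> q \<Longrightarrow> eps m k \<phi> \<in> Epre m (Suc q)"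
proof (induction q arbitrary: k)
  case 0
  have "k \<mu> = 0" if "\<mu> < m" for \<mu>
    using 0 that member_le_sum[of \<mu> "{..<m}" k] by (simp add: mabs_def)
  thus ?case by (simp add: eps_VD[OF \<phi>] fun_eq_iff bracket_eps[OF _ \<phi>])
next
  case (Suc q)
  have "bracket m \<mu> (eps m k \<phi>) \<in> Epre m (Suc q)" if \<mu>: "\<mu> < m" for \<mu>
  proof (cases "k \<mu> = 0")
    case True
    hence "bracket m \<mu> (eps m k \<phi>) = (\<lambda>\<alpha> i p. 0)" by (simp add: fun_eq_iff bracket_eps[OF \<mu> \<phi>])
    thus ?thesis by (simp only: Epre_zero)
  next
    case False
    define k' where "k' = k(\<mu> := k \<mu> - 1)"
    have "mabs m k = Suc (mabs m k')"
      using incr_decrement[of k \<mu>] mabs_incr[OF \<mu>, of k'] False by (simp add: k'_def)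
    hence "mabs m k' \<le> q" using Suc.prems(2) by simp
    moreover have "k' \<in> multi_idx m" unfolding k'_def using Suc.prems(1) \<mu> by (rule fun_upd_in_multi_idx)
    ultimately have "eps m k' \<phi> \<in> Epre m (Suc q)" by (intro Suc.IH)
    moreover have "bracket m \<mu> (eps m k \<phi>) = (\<lambda>\<alpha> i p. - eps m k' \<phi> \<alpha> i p)"
      using False by (simp add: fun_eq_iff bracket_eps[OF \<mu> \<phi>] k'_def)
    ultimately show ?thesis by (simp add: Epre_uminus del: Epre.simps)
  qed
  moreover have "eps m k \<phi> \<in> VD m" using \<phi> by (rule eps_VD)
  ultimately show ?case by (subst Epre.simps(2)) blast
qed

lemma eps_sum_in_Ecal: "\<forall>k \<alpha>. \<Phi> k \<alpha> \<in> Aalg m \<Longrightarrow> eps_sum m q \<Phi> \<in> Ecal m q"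
  unfolding eps_sum_def Ecal_def
  by (intro Epre_sum finite_Kset eps_in_Epre) (auto simp: Kset_def)

lemma eps_sum_Aalg: "\<forall>k \<alpha>. \<Phi> k \<alpha> \<in> Aalg m \<Longrightarrow> i \<in> multi_idx m \<Longrightarrow> eps_sum m q \<Phi> \<alpha> i \<in> Aalg m"
  unfolding eps_sum_def using eps_VD[of "\<Phi> _" m] by (intro Aalg_sum finite_Kset) (auto simp: VD_def)

lemma multi_idx_nonzero_obtain:
  assumes "i \<in> multi_idx m" "i \<noteq> (\<lambda>_. 0)"
  obtains \<mu> where "\<mu> < m" "0 < i \<mu>"
proof -
  obtain \<mu> where "i \<mu> \<noteq> 0" using assms(2) by (auto simp: fun_eq_iff)
  moreover have "\<mu> < m" using assms(1) calculation unfolding multi_idx_def by (cases "\<mu> < m") auto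
  ultimately show ?thesis using that by auto
qed

lemma VD_eq_zero_if_prolongation:
  fixes \<zeta> :: "('a, 'f::real_normed_field) vfield"
  assumes VD: "\<zeta> \<in> VD m" and zero: "\<And>\<alpha>. \<zeta> \<alpha> (\<lambda>_. 0) = (\<lambda>_. 0)"
    and prolong: "\<And>\<alpha> i \<mu>. i \<in> multi_idx m \<Longrightarrow> \<mu> < m \<Longrightarrow> \<zeta> \<alpha> (incr i \<mu>) = Dtot m \<mu> (\<zeta> \<alpha> i)"
  shows "\<zeta> = (\<lambda>\<alpha> i p. 0)"
proof -
  have "\<zeta> \<alpha> i = (\<lambda>_. 0)" if "i \<in> multi_idx m" for \<alpha> i
    using that
  proof (induction "mabs m i" arbitrary: i rule: less_induct)
    case less
    show ?case
    proof (cases "i = (\<lambda>_. 0)")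
      case False
      obtain \<mu> where \<mu>: "\<mu> < m" "0 < i \<mu>" by (rule multi_idx_nonzero_obtain[OF less.prems False])
      define i' where "i' = i(\<mu> := i \<mu> - 1)"
      have i': "i' \<in> multi_idx m" unfolding i'_def using less.prems \<mu>(1) by (rule fun_upd_in_multi_idx)
      have i: "i = incr i' \<mu>" unfolding i'_def by (rule incr_decrement[of i \<mu>, OF \<mu>(2), symmetric])
      have "\<zeta> \<alpha> i' = (\<lambda>_. 0)" using i' mabs_incr[OF \<mu>(1), of i'] by (intro less.hyps) (simp_all add: i[symmetric])
      thus ?thesis by (simp add: i prolong[OF i' \<mu>(1)] Dtot_zero)
    qed (simp add: zero)
  qed
  moreover have "\<zeta> \<alpha> i = (\<lambda>_. 0)" if "i \<notin> multi_idx m" for \<alpha> i using VD that by (simp add: VD_def)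
  ultimately show ?thesis by (metis ext)
qed

lemma Epre_eq_zero_if_low_orders_vanish:
  "\<zeta> \<in> Epre m q \<Longrightarrow> (\<And>\<alpha> i. i \<in> multi_idx m \<Longrightarrow> mabs m i < q \<Longrightarrow> \<zeta> \<alpha> i = (\<lambda>_. 0))
   \<Longrightarrow> \<zeta> = (\<lambda>\<alpha> i p. 0 :: 'f::real_normed_field)"
proof (induction q arbitrary: \<zeta>)
  case (Suc q)
  have bracket_zero: "bracket m \<mu> \<zeta> = (\<lambda>\<alpha> i p. 0)" if \<mu>: "\<mu> < m" for \<mu>
  proof (rule Suc.IH)
    show "bracket m \<mu> \<zeta> \<in> Epre m q" using Suc.prems(1) \<mu> by simp
    fix \<alpha> i assume i: "i \<in> multi_idx m" "mabs m i < q"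
    thus "bracket m \<mu> \<zeta> \<alpha> i = (\<lambda>_. 0)"
      using Suc.prems(2)[of i] Suc.prems(2)[of "incr i \<mu>"] incr_in_multi_idx[OF i(1) \<mu>] mabs_incr[OF \<mu>]
      by (simp add: bracket_def Dtot_zero)
  qed
  show ?case
  proof (rule VD_eq_zero_if_prolongation)
    show "\<zeta> \<in> VD m" using Suc.prems(1) by simp
    show "\<zeta> \<alpha> (\<lambda>_. 0) = (\<lambda>_. 0)" for \<alpha>
      by (rule Suc.prems(2)) (simp_all add: multi_idx_def mabs_def)
    show "\<zeta> \<alpha> (incr i \<mu>) = Dtot m \<mu> (\<zeta> \<alpha> i)" if "i \<in> multi_idx m" "\<mu> < m" for \<alpha> i \<mu>
      using fun_cong[OF fun_cong[OF fun_cong[OF bracket_zero[OF that(2)], of \<alpha>], of i]] that(1)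
      by (auto simp: bracket_def fun_eq_iff)
  qed
qed simp

section \<open>Solving the triangular system\<close>

lemma eps_sum_minus_diag_cong:
  assumes i: "i \<in> Kset m q" and eq: "\<And>k. k \<in> Kset m q \<Longrightarrow> mle m k i \<Longrightarrow> k \<noteq> i \<Longrightarrow> \<Phi> k = \<Psi> k"
  shows "eps_sum m q \<Phi> \<alpha> i p - \<Phi> i \<alpha> p =
    eps_sum m q \<Psi> \<alpha> i p - (\<Psi> i \<alpha> p :: 'f::real_normed_field)"
proof -
  have i_idx: "i \<in> multi_idx m" using i by (simp add: Kset_def)
  have lower: "(\<Sum>k\<in>Kset m q - {i}. eps m k (\<Phi> k) \<alpha> i p) = (\<Sum>k\<in>Kset m q - {i}. eps m k (\<Psi> k) \<alpha> i p)"
  proof (rule sum.cong[OF refl])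
    fix k assume "k \<in> Kset m q - {i}"
    thus "eps m k (\<Phi> k) \<alpha> i p = eps m k (\<Psi> k) \<alpha> i p"
      using eq[of k] by (cases "mle m k i") (simp_all add: eps_eq_0_if_not_mle)
  qed
  have "eps_sum m q \<Phi> \<alpha> i p = \<Phi> i \<alpha> p + (\<Sum>k\<in>Kset m q - {i}. eps m k (\<Phi> k) \<alpha> i p)"
    if "i \<in> Kset m q" for \<Phi> :: "_ \<Rightarrow> _ \<Rightarrow> ('a, 'f) fn"
    unfolding eps_sum_def using that finite_Kset by (simp add: sum.remove eps_self[OF i_idx])
  thus ?thesis using i lower by simp
qed

lemma eps_sum_coeffs_unique:
  assumes "eps_sum m q \<Phi> = (eps_sum m q \<Psi> :: ('a, 'f::real_normed_field) vfield)"
  shows "k \<in> Kset m q \<Longrightarrow> \<Phi> k = \<Psi> k"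
proof (induction "mabs m k" arbitrary: k rule: less_induct)
  case less
  have "\<Phi> k' = \<Psi> k'" if "k' \<in> Kset m q" "mle m k' k" "k' \<noteq> k" for k'
    using that less by (intro less.hyps mabs_less_if_mle) (auto simp: Kset_def)
  hence "eps_sum m q \<Phi> \<alpha> k p - \<Phi> k \<alpha> p = eps_sum m q \<Psi> \<alpha> k p - \<Psi> k \<alpha> p" for \<alpha> p
    using less.prems by (intro eps_sum_minus_diag_cong) auto
  thus ?case using assms by (simp add: fun_eq_iff)
qed

lemma eps_sum_solve:
  fixes \<zeta> :: "('a, 'f::real_normed_field) vfield"
  assumes \<zeta>: "\<zeta> \<in> VD m"
  obtains \<Phi> where "\<forall>k \<alpha>. \<Phi> k \<alpha> \<in> Aalg m" "\<And>\<alpha> i. i \<in> Kset m q \<Longrightarrow> eps_sum m q \<Phi> \<alpha> i = \<zeta> \<alpha> i"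
proof -
  have "\<exists>\<Phi>. (\<forall>k \<alpha>. \<Phi> k \<alpha> \<in> Aalg m) \<and> (\<forall>k. n \<le> mabs m k \<longrightarrow> \<Phi> k = (\<lambda>\<alpha> p. 0)) \<and>
      (\<forall>\<alpha>. \<forall>i\<in>Kset m q. mabs m i < n \<longrightarrow> eps_sum m q \<Phi> \<alpha> i = \<zeta> \<alpha> i)" for n
  proof (induction n)
    case 0 show ?case by (intro exI[of _ "\<lambda>k \<alpha> p. 0"]) (simp add: Aalg_const)
  next
    case (Suc n)
    then obtain \<Phi> where A: "\<forall>k \<alpha>. \<Phi> k \<alpha> \<in> Aalg m" and Z: "\<forall>k. n \<le> mabs m k \<longrightarrow> \<Phi> k = (\<lambda>\<alpha> p. 0)"
      and E: "\<forall>\<alpha>. \<forall>i\<in>Kset m q. mabs m i < n \<longrightarrow> eps_sum m q \<Phi> \<alpha> i = \<zeta> \<alpha> i"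
      by blast
    define \<Phi>' where "\<Phi>' k = (if k \<in> Kset m q \<and> mabs m k = n
      then (\<lambda>\<alpha> p. \<zeta> \<alpha> k p - eps_sum m q \<Phi> \<alpha> k p) else \<Phi> k)" for k
    have "\<Phi>' k \<alpha> \<in> Aalg m" for k \<alpha>
      using \<zeta> A by (auto simp: \<Phi>'_def VD_def Kset_def intro: Aalg_diff eps_sum_Aalg)
    moreover have "\<forall>k. Suc n \<le> mabs m k \<longrightarrow> \<Phi>' k = (\<lambda>\<alpha> p. 0)" using Z by (simp add: \<Phi>'_def)
    moreover have "eps_sum m q \<Phi>' \<alpha> i = \<zeta> \<alpha> i" if i: "i \<in> Kset m q" "mabs m i < Suc n" for \<alpha> i
    proof (rule ext)
      fix p
      have "\<Phi>' k = \<Phi> k" if "k \<in> Kset m q" "mle m k i" "k \<noteq> i" for k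
        using mabs_less_if_mle[of k m i] that i by (auto simp: \<Phi>'_def Kset_def)
      hence "eps_sum m q \<Phi>' \<alpha> i p - \<Phi>' i \<alpha> p = eps_sum m q \<Phi> \<alpha> i p - \<Phi> i \<alpha> p"
        using i(1) by (intro eps_sum_minus_diag_cong) auto
      thus "eps_sum m q \<Phi>' \<alpha> i p = \<zeta> \<alpha> i p"
        using i E Z by (cases "mabs m i = n") (auto simp: \<Phi>'_def)
    qed
    ultimately show ?case by blast
  qed
  then obtain \<Phi> where "\<forall>k \<alpha>. \<Phi> k \<alpha> \<in> Aalg m"
    "\<forall>\<alpha>. \<forall>i\<in>Kset m q. mabs m i < Suc q \<longrightarrow> eps_sum m q \<Phi> \<alpha> i = \<zeta> \<alpha> i"
    by blast
  thus ?thesis using that by (auto simp: Kset_def)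
qed

theorem mainTheorem17:
  fixes m :: nat
  assumes "m \<ge> 1"
  shows "\<forall>q::nat.
     (Ecal m q :: ('a::finite, 'f::real_normed_field) vfield set)
        = eps_sum m q ` {\<Phi>. \<forall>k \<alpha>. \<Phi> k \<alpha> \<in> Aalg m}
     \<and> (\<forall>\<Phi> \<Psi>. (\<forall>k \<alpha>. \<Phi> k \<alpha> \<in> Aalg m) \<longrightarrow> (\<forall>k \<alpha>. \<Psi> k \<alpha> \<in> Aalg m) \<longrightarrow>
           eps_sum m q \<Phi> = (eps_sum m q \<Psi> :: ('a, 'f) vfield) \<longrightarrow>
           (\<forall>k\<in>Kset m q. \<Phi> k = \<Psi> k))"
proof (rule allI, rule conjI)
  fix q
  show "(Ecal m q :: ('a, 'f) vfield set) = eps_sum m q ` {\<Phi>. \<forall>k \<alpha>. \<Phi> k \<alpha> \<in> Aalg m}"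
  proof (intro subset_antisym subsetI)
    fix \<zeta> :: "('a, 'f) vfield" assume \<zeta>: "\<zeta> \<in> Ecal m q"
    then obtain \<Phi> where A: "\<forall>k \<alpha>. \<Phi> k \<alpha> \<in> Aalg m"
      and E: "\<And>\<alpha> i. i \<in> Kset m q \<Longrightarrow> eps_sum m q \<Phi> \<alpha> i = \<zeta> \<alpha> i"
      using eps_sum_solve[of \<zeta> m q] by (auto simp: Ecal_def)
    have "(\<lambda>\<alpha> i p. \<zeta> \<alpha> i p - eps_sum m q \<Phi> \<alpha> i p) \<in> Epre m (Suc q)"
      using \<zeta> eps_sum_in_Ecal[OF A] unfolding Ecal_def by (rule Epre_diff)
    hence "(\<lambda>\<alpha> i p. \<zeta> \<alpha> i p - eps_sum m q \<Phi> \<alpha> i p) = (\<lambda>\<alpha> i p. 0)"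
      by (rule Epre_eq_zero_if_low_orders_vanish) (simp add: E Kset_def)
    hence "\<zeta> = eps_sum m q \<Phi>" by (simp add: fun_eq_iff)
    with A show "\<zeta> \<in> eps_sum m q ` {\<Phi>. \<forall>k \<alpha>. \<Phi> k \<alpha> \<in> Aalg m}" by blast
  qed (auto intro: eps_sum_in_Ecal)
  show "\<forall>\<Phi> \<Psi>. (\<forall>k \<alpha>. \<Phi> k \<alpha> \<in> Aalg m) \<longrightarrow> (\<forall>k \<alpha>. \<Psi> k \<alpha> \<in> Aalg m) \<longrightarrow>
      eps_sum m q \<Phi> = (eps_sum m q \<Psi> :: ('a, 'f) vfield) \<longrightarrow> (\<forall>k\<in>Kset m q. \<Phi> k = \<Psi> k)"
    using eps_sum_coeffs_unique by blast
qed

end
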